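(* For all positive integers $m,n,t,a$ with $m+n=t$, we have $\mathcal{F}(a,t)<\mathcal{F}(a,m,n)$.
   Context: $\mathcal{F}$ is defined on finite tuples of positive integers recursively: $\mathcal{F}(a)=1$ for every positive integer $a$; for $s\ge2$, $\mathcal{F}(a_1,\dots,a_s)=\sum_{i=1}^s\mathcal{F}(a_1,\dots,a_{i-1},a_i-1,a_{i+1},\dots,a_s)$, where a tuple with a zero entry is reduced by: $\mathcal{F}(0,a_2,\dots,a_t)=\mathcal{F}(a_2,\dots,a_t)$, $\mathcal{F}(a_1,\dots,a_t,0)=\mathcal{F}(a_1,\dots,a_t)$, and $\mathcal{F}(a_1,\dots,a_r,0,a_{r+2},\dots,a_s)=\mathcal{F}(a_1,\dots,a_{r-1},a_r+a_{r+2},a_{r+3},\dots,a_s)$. *)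

theory Defs
  imports Main
begin

definition dec_red :: "nat \<Rightarrow> nat list \<Rightarrow> nat list" where
  "dec_red i xs = (let ys = take i xs; z = xs ! i - 1; zs = drop (Suc i) xs in
     if z > 0 then ys @ z # zs
     else if ys = [] then zs
     else if zs = [] then ys
     else butlast ys @ [last ys + hd zs] @ tl zs)"

lemma sum_list_dec_red:
  assumes "i < length xs" "xs ! i > 0"
  shows "sum_list (dec_red i xs) < sum_list xs"
proof -
  have xs: "xs = take i xs @ xs ! i # drop (Suc i) xs"
    using assms(1) by (simp add: id_take_nth_drop)
  have s: "sum_list xs = sum_list (take i xs) + xs ! i + sum_list (drop (Suc i) xs)"
    by (subst xs) simp
  show ?thesis
  proof (cases "take i xs = [] \<or> drop (Suc i) xs = []")
    case True
    then show ?thesis using assms s by (auto simp: dec_red_def Let_def)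
  next
    case False
    then have a: "take i xs = butlast (take i xs) @ [last (take i xs)]"
      and b: "drop (Suc i) xs = hd (drop (Suc i) xs) # tl (drop (Suc i) xs)" by auto
    have "sum_list (take i xs) = sum_list (butlast (take i xs)) + last (take i xs)"
      by (subst a) simp
    moreover have "sum_list (drop (Suc i) xs) = hd (drop (Suc i) xs) + sum_list (tl (drop (Suc i) xs))"
      by (subst b) simp
    ultimately show ?thesis using assms s False by (auto simp: dec_red_def Let_def)
  qed
qed

text \<open>The function \<open>\<F>\<close> on tuples (lists) of positive integers. Values on lists
  containing 0 or on the empty list are junk (0).\<close>
function F :: "nat list \<Rightarrow> nat" where
  "F xs = (if xs = [] \<or> 0 \<in> set xs then 0
           else if length xs = 1 then 1
           else (\<Sum>i<length xs. F (dec_red i xs)))"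
  by auto
termination
  apply (relation "measure sum_list")
   apply simp
  apply (auto intro!: sum_list_dec_red simp: in_set_conv_nth)
  done

end

theory Submission
  imports Defs
begin

text \<open>Decrementing \<open>a\<close> on either side gives
  a smaller instance of the claim (or \<open>\<F>(t) = 1 < \<F>(m,n)\<close>); decrementing \<open>t\<close> on the
  left matches decrementing \<open>n\<close> on the right (again a smaller instance, or an equality
  when \<open>n = 1\<close>); and decrementing \<open>m\<close> contributes an extra positive term on the right.\<close>

declare F.simps [simp del]

lemma F_singleton: "x > 0 \<Longrightarrow> F [x] = 1"
  by (subst F.simps) simp

lemma F_pair:
  "a > 0 \<Longrightarrow> b > 0 \<Longrightarrow>
   F [a, b] = F (if a > 1 then [a - 1, b] else [b]) + F (if b > 1 then [a, b - 1] else [a])"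
  by (subst F.simps) (simp add: dec_red_def numeral_eq_Suc lessThan_Suc)

lemma F_triple:
  "a > 0 \<Longrightarrow> m > 0 \<Longrightarrow> n > 0 \<Longrightarrow>
   F [a, m, n] = F (if a > 1 then [a - 1, m, n] else [m, n])
     + F (if m > 1 then [a, m - 1, n] else [a + n])
     + F (if n > 1 then [a, m, n - 1] else [a, m])"
  by (subst F.simps) (simp add: dec_red_def numeral_eq_Suc lessThan_Suc)

lemma dec_red_0_Cons:
  "dec_red 0 (x # xs) = (if x > 1 then (x - 1) # xs else xs)"
  by (simp add: dec_red_def)

lemma F_pos:
  assumes "xs \<noteq> []" "0 \<notin> set xs"
  shows "F xs > 0"
  using assms
proof (induction xs rule: F.induct)
  case (1 xs)
  show ?case
  proof (cases "length xs = 1")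
    case True
    then show ?thesis using "1.prems" by (subst F.simps) simp
  next
    case False
    then obtain x y ys where xs: "xs = x # y # ys"
      using "1.prems"(1) by (cases xs) (auto simp: neq_Nil_conv)
    have "F (dec_red 0 xs) > 0"
      using "1.IH"[of 0] "1.prems" False by (auto simp: xs dec_red_0_Cons)
    moreover have "F (dec_red 0 xs) \<le> (\<Sum>i<length xs. F (dec_red i xs))"
      by (rule member_le_sum) (auto simp: xs)
    ultimately show ?thesis using "1.prems" False by (subst F.simps) simp
  qed
qed

lemma F_pair_less_F_triple:
  "a > 0 \<Longrightarrow> m > 0 \<Longrightarrow> n > 0 \<Longrightarrow> F [a, m + n] < F [a, m, n]"
proof (induction "a + m + n" arbitrary: a m n rule: less_induct)
  case less
  have dec_a: "F (if a > 1 then [a - 1, m + n] else [m + n])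
             \<le> F (if a > 1 then [a - 1, m, n] else [m, n])"
  proof (cases "a > 1")
    case True
    then have "F [a - 1, m + n] < F [a - 1, m, n]"
      using less by (intro less.hyps) auto
    then show ?thesis using True by simp
  next
    case False
    then show ?thesis using less.prems F_pos[of "[m, n]"] by (simp add: F_singleton)
  qed
  have dec_t: "F (if m + n > 1 then [a, m + n - 1] else [a])
             \<le> F (if n > 1 then [a, m, n - 1] else [a, m])"
  proof (cases "n > 1")
    case True
    then have "F [a, m + (n - 1)] < F [a, m, n - 1]"
      using less by (intro less.hyps) auto
    then show ?thesis using True by simp
  next
    case False
    then have "n = 1" using less.prems by simp
    then show ?thesis using less.prems by simp
  qed
  have dec_m: "F (if m > 1 then [a, m - 1, n] else [a + n]) > 0"
    using less.prems by (intro F_pos) auto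
  have "F [a, m + n] = F (if a > 1 then [a - 1, m + n] else [m + n])
                      + F (if m + n > 1 then [a, m + n - 1] else [a])"
    using F_pair[of a "m + n"] less.prems by simp
  then show ?case
    using F_triple[OF less.prems] dec_a dec_t dec_m by linarith
qed

theorem proposition4:
  fixes m n t a :: nat
  assumes "m > 0" "n > 0" "t > 0" "a > 0" "m + n = t"
  shows "F [a, t] < F [a, m, n]"
  using F_pair_less_F_triple[of a m n] assms by simp

end
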